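(* The variety $\mathsf{V}(S_{(4,398)})$ is the ai-semiring variety defined by the identities $xy\approx yx$, $xy\approx xy+x$, $x^2+yz\approx x^2yz$, $xyz\approx xy+yz+xz$.
   Context: An ai-semiring is an algebra $(S,+,\cdot)$ with $(S,+)$ a semilattice, $(S,\cdot)$ a semigroup, and both distributive laws. $\mathsf{V}(S)$ is the variety generated by $S$; "the ai-semiring variety defined by identities $\Sigma$" is the class of all ai-semirings satisfying $\Sigma$. $S_{(4,398)}$ has carrier $\{1,2,3,4\}$; addition: $x+x=x$, $2+x=x$, $1+x=1$ for all $x$, $3+4=1$; multiplication (row $a$, column $b$ gives $a\cdot b$): row $1$: $1,1,1,1$; row $2$: $1,2,1,4$; row $3$: $1,1,1,1$; row $4$: $1,4,1,1$. *)

theory Defs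
  imports Main
begin

datatype trm = Var nat | Plus trm trm | Times trm trm

fun eval :: "('a \<Rightarrow> 'a \<Rightarrow> 'a) \<Rightarrow> ('a \<Rightarrow> 'a \<Rightarrow> 'a) \<Rightarrow> (nat \<Rightarrow> 'a) \<Rightarrow> trm \<Rightarrow> 'a" where
  "eval ad mu \<rho> (Var i) = \<rho> i"
| "eval ad mu \<rho> (Plus s t) = ad (eval ad mu \<rho> s) (eval ad mu \<rho> t)"
| "eval ad mu \<rho> (Times s t) = mu (eval ad mu \<rho> s) (eval ad mu \<rho> t)"

definition holds_in :: "'a set \<Rightarrow> ('a \<Rightarrow> 'a \<Rightarrow> 'a) \<Rightarrow> ('a \<Rightarrow> 'a \<Rightarrow> 'a) \<Rightarrow> trm \<Rightarrow> trm \<Rightarrow> bool" where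
  "holds_in A ad mu u v \<longleftrightarrow> (\<forall>\<rho>. (\<forall>i. \<rho> i \<in> A) \<longrightarrow> eval ad mu \<rho> u = eval ad mu \<rho> v)"

definition ai_semiring :: "('a \<Rightarrow> 'a \<Rightarrow> 'a) \<Rightarrow> ('a \<Rightarrow> 'a \<Rightarrow> 'a) \<Rightarrow> bool" where
  "ai_semiring ad mu \<longleftrightarrow>
     (\<forall>x y z. ad (ad x y) z = ad x (ad y z)) \<and>
     (\<forall>x y. ad x y = ad y x) \<and>
     (\<forall>x. ad x x = x) \<and>
     (\<forall>x y z. mu (mu x y) z = mu x (mu y z)) \<and>
     (\<forall>x y z. mu x (ad y z) = ad (mu x y) (mu x z)) \<and>
     (\<forall>x y z. mu (ad x y) z = ad (mu x z) (mu y z))"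

definition S4_carrier :: "nat set" where "S4_carrier = {1,2,3,4}"

definition S4_add :: "nat \<Rightarrow> nat \<Rightarrow> nat" where
  "S4_add a b = (if a = b then a else if a = 2 then b else if b = 2 then a else 1)"

definition S4_mul :: "nat \<Rightarrow> nat \<Rightarrow> nat" where
  "S4_mul a b = (if a = 2 \<and> b = 2 then 2
                 else if (a = 2 \<and> b = 4) \<or> (a = 4 \<and> b = 2) then 4 else 1)"

text \<open>Membership in the variety V(S_(4,398)) generated by S_(4,398):
  by Birkhoff's HSP theorem, V(S) is the class of algebras satisfying every
  identity that holds in S.\<close>
definition in_V_S4 :: "('a \<Rightarrow> 'a \<Rightarrow> 'a) \<Rightarrow> ('a \<Rightarrow> 'a \<Rightarrow> 'a) \<Rightarrow> bool" where
  "in_V_S4 ad mu \<longleftrightarrow>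
     (\<forall>u v. holds_in S4_carrier S4_add S4_mul u v \<longrightarrow> holds_in UNIV ad mu u v)"

end

theory Submission
  imports Defs
begin

(* Modulo the identities every term is a sum of monomials of degree at most 2:
   xyz = xy + yz + xz splits longer products, and commutativity makes a degree-2
   monomial an unordered pair.  The sum over a set A of monomials does not change when
   A is closed under the absorptions xy = xy + x and x^2 + yz = x^2 + yz + xy, and this
   closure is determined by four data: the variables occurring in A, those occurring
   in degree-2 monomials, the squared ones, and the products of two unsquared
   variables that occur.  Each datum is detected in S_(4,398) by sending the variables
   of a set X to c (c = 1, 3, 4) and all others to 2: every monomial then takes a value
   in {1, 2, c}, and the term takes the value 1 iff one of its monomials does.  So both
   sides of an identity of S_(4,398) have the same closure, hence the identity holds in
   every model of the four identities. *)

datatype mon = Deg1 nat | Deg2 nat nat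

fun mon_vars :: "mon \<Rightarrow> nat set" where
  "mon_vars (Deg1 a) = {a}"
| "mon_vars (Deg2 a b) = {a, b}"

fun eval_mon :: "('a \<Rightarrow> 'a \<Rightarrow> 'a) \<Rightarrow> (nat \<Rightarrow> 'a) \<Rightarrow> mon \<Rightarrow> 'a" where
  "eval_mon mu \<rho> (Deg1 a) = \<rho> a"
| "eval_mon mu \<rho> (Deg2 a b) = mu (\<rho> a) (\<rho> b)"

text \<open>Modulo \<open>xyz \<approx> xy + yz + xz\<close> a product of monomials is the sum of all
  degree-2 subwords of the concatenated word.\<close>
fun mon_mult :: "mon \<Rightarrow> mon \<Rightarrow> mon set" where
  "mon_mult (Deg1 a) (Deg1 b) = {Deg2 a b}"
| "mon_mult (Deg1 a) (Deg2 b c) = {Deg2 a b, Deg2 b c, Deg2 a c}"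
| "mon_mult (Deg2 a b) (Deg1 c) = {Deg2 a b, Deg2 b c, Deg2 a c}"
| "mon_mult (Deg2 a b) (Deg2 c d) =
     {Deg2 a b, Deg2 a c, Deg2 a d, Deg2 b c, Deg2 b d, Deg2 c d}"

fun monomials :: "trm \<Rightarrow> mon set" where
  "monomials (Var i) = {Deg1 i}"
| "monomials (Plus s t) = monomials s \<union> monomials t"
| "monomials (Times s t) = (\<Union>m\<in>monomials s. \<Union>n\<in>monomials t. mon_mult m n)"

lemma finite_mon_vars: "finite (mon_vars m)"
  by (cases m) auto

lemma finite_mon_mult: "finite (mon_mult m n)"
  and mon_mult_nonempty: "mon_mult m n \<noteq> {}"
  by (cases m; cases n; simp)+

lemma finite_monomials: "finite (monomials t)"
  and monomials_nonempty: "monomials t \<noteq> {}"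
  by (induction t) (auto simp: finite_mon_mult mon_mult_nonempty)

definition vars_of :: "mon set \<Rightarrow> nat set" where
  "vars_of A = (\<Union>m\<in>A. mon_vars m)"

definition deg2_vars :: "mon set \<Rightarrow> nat set" where
  "deg2_vars A = {x. \<exists>y. Deg2 x y \<in> A \<or> Deg2 y x \<in> A}"

definition square_vars :: "mon set \<Rightarrow> nat set" where
  "square_vars A = {x. Deg2 x x \<in> A}"

definition mon_closure :: "mon set \<Rightarrow> mon set" where
  "mon_closure A = Deg1 ` vars_of A \<union>
     {Deg2 a b | a b. Deg2 a b \<in> A \<or> Deg2 b a \<in> A \<or>
        (a \<in> square_vars A \<and> b \<in> deg2_vars A) \<or> (b \<in> square_vars A \<and> a \<in> deg2_vars A)}"

lemma Deg1_mem_mon_closure_iff: "Deg1 x \<in> mon_closure A \<longleftrightarrow> x \<in> vars_of A"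
  by (auto simp: mon_closure_def)

lemma Deg2_mem_mon_closure_iff:
  "Deg2 a b \<in> mon_closure A \<longleftrightarrow> Deg2 a b \<in> A \<or> Deg2 b a \<in> A \<or>
     (a \<in> square_vars A \<and> b \<in> deg2_vars A) \<or> (b \<in> square_vars A \<and> a \<in> deg2_vars A)"
  unfolding mon_closure_def by blast

lemma square_vars_subset_deg2_vars: "square_vars A \<subseteq> deg2_vars A"
  unfolding square_vars_def deg2_vars_def by auto

lemma deg2_vars_subset_vars_of: "deg2_vars A \<subseteq> vars_of A"
  unfolding deg2_vars_def vars_of_def by force

lemma deg2_vars_if_mem: "Deg2 a b \<in> A \<or> Deg2 b a \<in> A \<Longrightarrow> a \<in> deg2_vars A \<and> b \<in> deg2_vars A"
  by (auto simp: deg2_vars_def)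

lemma subset_mon_closure: "A \<subseteq> mon_closure A"
proof
  fix m assume "m \<in> A"
  then show "m \<in> mon_closure A"
    by (cases m) (force simp: Deg1_mem_mon_closure_iff Deg2_mem_mon_closure_iff vars_of_def)+
qed

lemma finite_mon_closure:
  assumes "finite A"
  shows "finite (mon_closure A)"
proof -
  let ?V = "vars_of A"
  have "finite ?V"
    using assms by (simp add: vars_of_def finite_mon_vars)
  moreover have "m \<in> Deg1 ` ?V \<union> (\<lambda>(a, b). Deg2 a b) ` (?V \<times> ?V)" if "m \<in> mon_closure A" for m
  proof (cases m)
    case (Deg1 x)
    then show ?thesis using that by (simp add: Deg1_mem_mon_closure_iff)
  next
    case (Deg2 a b)
    then have "a \<in> deg2_vars A \<and> b \<in> deg2_vars A"
      using that deg2_vars_if_mem[of a b A] square_vars_subset_deg2_vars[of A]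
      by (auto simp: Deg2_mem_mon_closure_iff)
    then show ?thesis using Deg2 deg2_vars_subset_vars_of by blast
  qed
  ultimately show ?thesis
    by (meson finite_Un finite_SigmaI finite_imageI finite_subset subsetI)
qed

lemma mon_closure_eqI:
  assumes "vars_of A = vars_of B" "deg2_vars A = deg2_vars B" "square_vars A = square_vars B"
    and "\<And>a b. a \<notin> square_vars A \<Longrightarrow> b \<notin> square_vars A \<Longrightarrow>
           Deg2 a b \<in> A \<or> Deg2 b a \<in> A \<longleftrightarrow> Deg2 a b \<in> B \<or> Deg2 b a \<in> B"
  shows "mon_closure A = mon_closure B"
proof (rule set_eqI)
  fix m
  show "m \<in> mon_closure A \<longleftrightarrow> m \<in> mon_closure B"
  proof (cases m)
    case (Deg1 x)
    then show ?thesis using assms(1) by (simp add: Deg1_mem_mon_closure_iff)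
  next
    case (Deg2 a b)
    then show ?thesis
      using deg2_vars_if_mem[of a b A] deg2_vars_if_mem[of a b B] assms(2,3) assms(4)[of a b]
        square_vars_subset_deg2_vars[of A]
      by (auto simp: Deg2_mem_mon_closure_iff)
  qed
qed

context semilattice_set
begin

lemma UNION:
  assumes "finite I" "I \<noteq> {}" "\<And>i. i \<in> I \<Longrightarrow> finite (G i) \<and> G i \<noteq> {}"
  shows "F (\<Union>i\<in>I. G i) = F ((\<lambda>i. F (G i)) ` I)"
  using assms
proof (induction I rule: finite_ne_induct)
  case (insert i I)
  then show ?case by (simp add: union)
qed simp

lemma absorbed_superset_eq:
  assumes "finite B" "A \<subseteq> B" "A \<noteq> {}" "\<And>b. b \<in> B \<Longrightarrow> b \<^bold>* F A = F A"
  shows "F B = F A"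
proof -
  have "B \<noteq> {}" using assms(2,3) by blast
  with assms(1) have "F B \<^bold>* F A = F A"
    using assms(4)
  proof (induction B rule: finite_ne_induct)
    case (insert b B)
    then show ?case by (simp add: assoc)
  qed simp
  moreover have "F A \<^bold>* F B = F B"
    using subset[OF assms(1,3,2)] .
  ultimately show ?thesis by (simp add: commute)
qed

end

locale S4_identities =
  fixes ad mu :: "'a \<Rightarrow> 'a \<Rightarrow> 'a"
  assumes ai_semiring: "ai_semiring ad mu"
    and mult_commute: "\<And>x y. mu x y = mu y x"
    and mult_absorbs_factor: "\<And>x y. mu x y = ad (mu x y) x"
    and square_add_mult: "\<And>x y z. ad (mu x x) (mu y z) = mu (mu (mu x x) y) z"
    and mult_mult_expand: "\<And>x y z. mu (mu x y) z = ad (ad (mu x y) (mu y z)) (mu x z)"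
begin

lemma mult_assoc: "mu (mu x y) z = mu x (mu y z)"
  and distrib_left: "mu x (ad y z) = ad (mu x y) (mu x z)"
  and distrib_right: "mu (ad x y) z = ad (mu x z) (mu y z)"
  using ai_semiring unfolding ai_semiring_def by blast+

sublocale join: semilattice_set ad
  by unfold_locales (use ai_semiring in \<open>auto simp: ai_semiring_def\<close>)

lemmas join_ac = join.assoc join.commute join.left_commute

definition sum_mons :: "(nat \<Rightarrow> 'a) \<Rightarrow> mon set \<Rightarrow> 'a" where
  "sum_mons \<rho> A = join.F (eval_mon mu \<rho> ` A)"

lemma sum_mons_UN:
  assumes "finite I" "I \<noteq> {}" "\<And>i. i \<in> I \<Longrightarrow> finite (G i) \<and> G i \<noteq> {}"
  shows "sum_mons \<rho> (\<Union>i\<in>I. G i) = join.F ((\<lambda>i. sum_mons \<rho> (G i)) ` I)"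
  unfolding sum_mons_def image_UN using assms by (simp add: join.UNION)

lemma mult_of_mults:
  "mu (mu a b) (mu c d) =
     ad (mu a b) (ad (mu a c) (ad (mu a d) (ad (mu b c) (ad (mu b d) (mu c d)))))"
proof -
  have "mu (mu a b) (mu c d) = ad (ad (mu a b) (mu b (mu c d))) (mu a (mu c d))"
    by (rule mult_mult_expand)
  also have "mu b (mu c d) = ad (ad (mu b c) (mu c d)) (mu b d)"
    using mult_mult_expand[of b c d] by (simp add: mult_assoc)
  also have "mu a (mu c d) = ad (ad (mu a c) (mu c d)) (mu a d)"
    using mult_mult_expand[of a c d] by (simp add: mult_assoc)
  finally show ?thesis by (simp add: join_ac)
qed

lemma square_add_mult_absorbs: "ad (ad (mu x x) (mu y z)) (mu x y) = ad (mu x x) (mu y z)"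
proof -
  have "ad (mu x x) (mu y z) = mu (mu x x) (mu y z)"
    using square_add_mult[of x y z] by (simp add: mult_assoc)
  also have "\<dots> = ad (mu x x) (ad (mu x y) (ad (mu x z) (ad (mu x y) (ad (mu x z) (mu y z)))))"
    by (rule mult_of_mults)
  finally have "ad (mu x x) (mu y z) = ad (mu x x) (ad (mu x y) (ad (mu x z) (mu y z)))"
    by (simp add: join_ac)
  then show ?thesis by (simp add: join_ac)
qed

lemma eval_mon_mult: "mu (eval_mon mu \<rho> m) (eval_mon mu \<rho> n) = sum_mons \<rho> (mon_mult m n)"
proof (cases m; cases n)
  fix a b c d assume "m = Deg2 a b" "n = Deg2 c d"
  then show ?thesis by (simp add: sum_mons_def mult_of_mults join_ac)
qed (simp_all add: sum_mons_def mult_mult_expand mult_assoc[symmetric] join_ac)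

lemma eval_eq_sum_monomials: "eval ad mu \<rho> t = sum_mons \<rho> (monomials t)"
proof (induction t)
  case (Var i)
  then show ?case by (simp add: sum_mons_def)
next
  case (Plus s t)
  then show ?case
    by (simp add: sum_mons_def image_Un join.union finite_monomials monomials_nonempty)
next
  case (Times s t)
  let ?A = "monomials s" and ?B = "monomials t"
  have hom: "finite C \<Longrightarrow> C \<noteq> {} \<Longrightarrow> h (join.F C) = join.F (h ` C)"
    if "\<And>x y. h (ad x y) = ad (h x) (h y)" for h C
    by (rule join.hom_commute) (use that in auto)
  have "eval ad mu \<rho> (Times s t) = mu (sum_mons \<rho> ?A) (sum_mons \<rho> ?B)"
    using Times by simp
  also have "\<dots> = join.F ((\<lambda>m. mu (eval_mon mu \<rho> m) (sum_mons \<rho> ?B)) ` ?A)"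
    unfolding sum_mons_def[of _ ?A]
    using hom[of "\<lambda>x. mu x _"] finite_monomials monomials_nonempty
    by (simp add: distrib_right image_image)
  also have "\<dots> = join.F ((\<lambda>m. join.F ((\<lambda>n. sum_mons \<rho> (mon_mult m n)) ` ?B)) ` ?A)"
    unfolding sum_mons_def[of _ ?B]
    using hom[of "mu _"] finite_monomials monomials_nonempty
    by (simp add: distrib_left image_image eval_mon_mult)
  also have "\<dots> = join.F ((\<lambda>m. sum_mons \<rho> (\<Union>n\<in>?B. mon_mult m n)) ` ?A)"
    by (simp add: sum_mons_UN finite_monomials monomials_nonempty finite_mon_mult
        mon_mult_nonempty)
  also have "\<dots> = sum_mons \<rho> (monomials (Times s t))"
    by (simp add: sum_mons_UN finite_monomials monomials_nonempty finite_mon_mult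
        mon_mult_nonempty)
  finally show ?case .
qed

lemma sum_mons_absorbs_mon_closure:
  assumes "finite A" "m \<in> mon_closure A"
  shows "ad (eval_mon mu \<rho> m) (sum_mons \<rho> A) = sum_mons \<rho> A"
proof -
  let ?S = "sum_mons \<rho> A"
  define absorbed where "absorbed x \<longleftrightarrow> ad x ?S = ?S" for x
  have member: "absorbed (eval_mon mu \<rho> n)" if "n \<in> A" for n
    unfolding absorbed_def sum_mons_def using assms(1) that by (simp add: join.in_idem)
  have join: "absorbed (ad x y)" if "absorbed x" "absorbed y" for x y
    using that unfolding absorbed_def by (metis join.assoc)
  have down: "absorbed y" if "absorbed x" "ad x y = x" for x y
    using that unfolding absorbed_def by (metis join.assoc join.commute)
  have pair: "absorbed (mu (\<rho> a) (\<rho> b))" if "Deg2 a b \<in> A \<or> Deg2 b a \<in> A" for a b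
    using that member[of "Deg2 a b"] member[of "Deg2 b a"] by (auto simp: mult_commute)
  have square: "absorbed (mu (\<rho> x) (\<rho> y))" if "x \<in> square_vars A" "y \<in> deg2_vars A" for x y
  proof -
    obtain z where "Deg2 y z \<in> A \<or> Deg2 z y \<in> A"
      using \<open>y \<in> deg2_vars A\<close> by (auto simp: deg2_vars_def)
    moreover have "Deg2 x x \<in> A" using \<open>x \<in> square_vars A\<close> by (simp add: square_vars_def)
    ultimately have "absorbed (ad (mu (\<rho> x) (\<rho> x)) (mu (\<rho> y) (\<rho> z)))"
      using join pair member by fastforce
    then show ?thesis using down square_add_mult_absorbs by blast
  qed
  have "absorbed (eval_mon mu \<rho> m)"
  proof (cases m)
    case (Deg1 x)
    then obtain n where "n \<in> A" "x \<in> mon_vars n"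
      using assms(2) by (auto simp: Deg1_mem_mon_closure_iff vars_of_def)
    then consider "n = Deg1 x" | y where "Deg2 x y \<in> A \<or> Deg2 y x \<in> A"
      by (cases n) auto
    then show ?thesis
    proof cases
      case 1
      then show ?thesis using Deg1 member[OF \<open>n \<in> A\<close>] by simp
    next
      case 2
      then show ?thesis using Deg1 down[OF pair mult_absorbs_factor[symmetric]] by simp
    qed
  next
    case (Deg2 a b)
    then show ?thesis
      using assms(2) square[of a b] square[of b a] pair[of a b]
      by (auto simp: Deg2_mem_mon_closure_iff mult_commute)
  qed
  then show ?thesis unfolding absorbed_def .
qed

lemma sum_mons_mon_closure:
  assumes "finite A" "A \<noteq> {}"
  shows "sum_mons \<rho> (mon_closure A) = sum_mons \<rho> A"
  unfolding sum_mons_def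
proof (rule join.absorbed_superset_eq)
  show "finite (eval_mon mu \<rho> ` mon_closure A)"
    using finite_mon_closure[OF assms(1)] by blast
  show "eval_mon mu \<rho> ` A \<subseteq> eval_mon mu \<rho> ` mon_closure A"
    using subset_mon_closure by blast
  show "eval_mon mu \<rho> ` A \<noteq> {}"
    using assms(2) by blast
  show "ad x (join.F (eval_mon mu \<rho> ` A)) = join.F (eval_mon mu \<rho> ` A)"
    if "x \<in> eval_mon mu \<rho> ` mon_closure A" for x
    using that sum_mons_absorbs_mon_closure[OF assms(1)] unfolding sum_mons_def by blast
qed

end

lemma S4_ai_semiring: "ai_semiring S4_add S4_mul"
  unfolding ai_semiring_def S4_add_def S4_mul_def by auto

interpretation S4: S4_identities S4_add S4_mul
proof (rule S4_identities.intro[OF S4_ai_semiring])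
  fix x y z :: nat
  show "S4_mul x y = S4_mul y x"
    by (simp add: S4_mul_def)
  show "S4_mul x y = S4_add (S4_mul x y) x"
    unfolding S4_add_def S4_mul_def by auto
  show "S4_add (S4_mul x x) (S4_mul y z) = S4_mul (S4_mul (S4_mul x x) y) z"
    \<comment> \<open>\<open>x x\<close> is \<open>2\<close> for \<open>x = 2\<close> and the absorbing \<open>1\<close> otherwise\<close>
    by (cases "x = 2") (simp_all add: S4_add_def S4_mul_def)
  show "S4_mul (S4_mul x y) z = S4_add (S4_add (S4_mul x y) (S4_mul y z)) (S4_mul x z)"
    unfolding S4_add_def S4_mul_def by auto
qed

lemma S4_add_in_triple:
  assumes "x \<in> {1, 2, c}" "y \<in> {1, 2, c}"
  shows "S4_add x y \<in> {1, 2, c}" and "S4_add x y = 1 \<longleftrightarrow> x = 1 \<or> y = 1"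
  using assms unfolding S4_add_def by auto

text \<open>The restriction to \<open>{1, 2, c}\<close> matters: \<open>1\<close> is absorbing, but \<open>3 + 4 = 1\<close>.\<close>
lemma S4_sum_eq_1_iff:
  assumes "finite S" "S \<noteq> {}" "S \<subseteq> {1, 2, c}"
  shows "S4.join.F S = 1 \<longleftrightarrow> 1 \<in> S"
proof -
  have "S4.join.F S \<in> {1, 2, c} \<and> (S4.join.F S = 1 \<longleftrightarrow> 1 \<in> S)"
    using assms
  proof (induction S rule: finite_ne_induct)
    case (insert x S)
    then have "x \<in> {1, 2, c}" "S4.join.F S \<in> {1, 2, c}" "S4.join.F S = 1 \<longleftrightarrow> 1 \<in> S"
      by blast+
    with insert.hyps show ?case
      using S4_add_in_triple[of x c "S4.join.F S"] by (simp del: One_nat_def)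
  qed auto
  then show ?thesis ..
qed

definition S4_val :: "nat set \<Rightarrow> nat \<Rightarrow> nat \<Rightarrow> nat" where
  "S4_val X c i = (if i \<in> X then c else 2)"

lemma eval_mon_S4_val: "eval_mon S4_mul (S4_val X c) m \<in> {1, 2, c}"
  by (cases m) (auto simp: S4_val_def S4_mul_def)

lemma eval_mon_S4_val_eq_1_iff:
  "eval_mon S4_mul (S4_val X 1) m = 1 \<longleftrightarrow> mon_vars m \<inter> X \<noteq> {}"
  "eval_mon S4_mul (S4_val X 3) m = 1 \<longleftrightarrow> (\<exists>a b. m = Deg2 a b \<and> (a \<in> X \<or> b \<in> X))"
  "eval_mon S4_mul (S4_val X 4) m = 1 \<longleftrightarrow> (\<exists>a b. m = Deg2 a b \<and> a \<in> X \<and> b \<in> X)"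
  by (cases m; auto simp: S4_val_def S4_mul_def)+

lemma S4_val_in_carrier: "c \<in> S4_carrier \<Longrightarrow> S4_val X c i \<in> S4_carrier"
  by (simp add: S4_val_def S4_carrier_def)

lemma holds_in_S4_ex_monomial_eq_1_iff:
  assumes "holds_in S4_carrier S4_add S4_mul u v" "c \<in> S4_carrier"
  shows "(\<exists>m\<in>monomials u. eval_mon S4_mul (S4_val X c) m = 1) \<longleftrightarrow>
         (\<exists>m\<in>monomials v. eval_mon S4_mul (S4_val X c) m = 1)"
proof -
  let ?\<rho> = "S4_val X c"
  have "eval S4_add S4_mul ?\<rho> t = 1 \<longleftrightarrow> 1 \<in> eval_mon S4_mul ?\<rho> ` monomials t" for t
    unfolding S4.eval_eq_sum_monomials S4.sum_mons_def
    by (rule S4_sum_eq_1_iff) (use eval_mon_S4_val finite_monomials monomials_nonempty in auto)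
  moreover have "eval S4_add S4_mul ?\<rho> u = eval S4_add S4_mul ?\<rho> v"
    using assms S4_val_in_carrier unfolding holds_in_def by blast
  ultimately show ?thesis
    unfolding image_iff by (metis (no_types, lifting))
qed

lemma holds_in_S4_mon_closure_eq:
  assumes "holds_in S4_carrier S4_add S4_mul u v"
  shows "mon_closure (monomials u) = mon_closure (monomials v)"
proof -
  let ?A = "monomials u" and ?B = "monomials v"
  have same: "(\<exists>m\<in>?A. eval_mon S4_mul (S4_val X c) m = 1) \<longleftrightarrow>
              (\<exists>m\<in>?B. eval_mon S4_mul (S4_val X c) m = 1)" if "c \<in> S4_carrier" for X c
    using holds_in_S4_ex_monomial_eq_1_iff[OF assms that] .
  have carrier: "1 \<in> S4_carrier" "3 \<in> S4_carrier" "4 \<in> S4_carrier"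
    by (simp_all add: S4_carrier_def)
  have vars: "x \<in> vars_of C \<longleftrightarrow> (\<exists>m\<in>C. eval_mon S4_mul (S4_val {x} 1) m = 1)" for x C
    unfolding eval_mon_S4_val_eq_1_iff vars_of_def by auto
  have deg2: "x \<in> deg2_vars C \<longleftrightarrow> (\<exists>m\<in>C. eval_mon S4_mul (S4_val {x} 3) m = 1)" for x C
    unfolding eval_mon_S4_val_eq_1_iff deg2_vars_def by auto
  have square: "x \<in> square_vars C \<longleftrightarrow> (\<exists>m\<in>C. eval_mon S4_mul (S4_val {x} 4) m = 1)" for x C
    unfolding eval_mon_S4_val_eq_1_iff square_vars_def by auto
  have pair: "Deg2 a b \<in> C \<or> Deg2 b a \<in> C \<longleftrightarrow> (\<exists>m\<in>C. eval_mon S4_mul (S4_val {a, b} 4) m = 1)"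
    if "a \<notin> square_vars C" "b \<notin> square_vars C" for a b C
    using that unfolding eval_mon_S4_val_eq_1_iff square_vars_def by auto
  have squares: "square_vars ?A = square_vars ?B"
    unfolding set_eq_iff square by (simp only: same[OF carrier(3)] simp_thms)
  show ?thesis
  proof (rule mon_closure_eqI)
    show "vars_of ?A = vars_of ?B"
      unfolding set_eq_iff vars by (simp only: same[OF carrier(1)] simp_thms)
    show "deg2_vars ?A = deg2_vars ?B"
      unfolding set_eq_iff deg2 by (simp only: same[OF carrier(2)] simp_thms)
    show "square_vars ?A = square_vars ?B" by (rule squares)
    show "Deg2 a b \<in> ?A \<or> Deg2 b a \<in> ?A \<longleftrightarrow> Deg2 a b \<in> ?B \<or> Deg2 b a \<in> ?B"
      if "a \<notin> square_vars ?A" "b \<notin> square_vars ?A" for a b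
      using that pair[of a ?A b] pair[of a ?B b] same[OF carrier(3), of "{a, b}"] squares by simp
  qed
qed

theorem (in S4_identities) in_V_S4: "in_V_S4 ad mu"
  unfolding in_V_S4_def
proof (intro allI impI)
  fix u v
  assume "holds_in S4_carrier S4_add S4_mul u v"
  then have "mon_closure (monomials u) = mon_closure (monomials v)"
    by (rule holds_in_S4_mon_closure_eq)
  then show "holds_in UNIV ad mu u v"
    unfolding holds_in_def
    by (metis eval_eq_sum_monomials sum_mons_mon_closure finite_monomials monomials_nonempty)
qed

definition S4_basis :: "(trm \<times> trm) list" where
  "S4_basis = (let x = Var 0; y = Var 1; z = Var 2 in
     [(Plus (Plus x y) z, Plus x (Plus y z)),
      (Plus x y, Plus y x),
      (Plus x x, x),
      (Times (Times x y) z, Times x (Times y z)),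
      (Times x (Plus y z), Plus (Times x y) (Times x z)),
      (Times (Plus x y) z, Plus (Times x z) (Times y z)),
      (Times x y, Times y x),
      (Times x y, Plus (Times x y) x),
      (Plus (Times x x) (Times y z), Times (Times (Times x x) y) z),
      (Times (Times x y) z, Plus (Plus (Times x y) (Times y z)) (Times x z))])"

lemma S4_identities_iff_basis:
  "S4_identities ad mu \<longleftrightarrow> (\<forall>(u, v) \<in> set S4_basis. holds_in UNIV ad mu u v)"
proof
  assume "S4_identities ad mu"
  then interpret S4_identities ad mu .
  show "\<forall>(u, v) \<in> set S4_basis. holds_in UNIV ad mu u v"
    unfolding S4_basis_def holds_in_def Let_def
    by (simp only: list.set ball_simps case_prod_conv eval.simps)
      (intro conjI allI impI TrueI; rule join.assoc join.commute join.idem mult_assoc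
        distrib_left distrib_right mult_commute mult_absorbs_factor square_add_mult
        mult_mult_expand)
next
  assume basis: "\<forall>(u, v) \<in> set S4_basis. holds_in UNIV ad mu u v"
  have "ad (ad x y) z = ad x (ad y z) \<and> ad x y = ad y x \<and> ad x x = x \<and>
    mu (mu x y) z = mu x (mu y z) \<and> mu x (ad y z) = ad (mu x y) (mu x z) \<and>
    mu (ad x y) z = ad (mu x z) (mu y z) \<and> mu x y = mu y x \<and> mu x y = ad (mu x y) x \<and>
    ad (mu x x) (mu y z) = mu (mu (mu x x) y) z \<and>
    mu (mu x y) z = ad (ad (mu x y) (mu y z)) (mu x z)" for x y z
  proof -
    have "\<forall>(u, v) \<in> set S4_basis. eval ad mu ((!) [x, y, z]) u = eval ad mu ((!) [x, y, z]) v"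
      using basis by (auto simp: holds_in_def)
    from this[unfolded S4_basis_def Let_def, simplified] show ?thesis .
  qed
  then show "S4_identities ad mu"
    unfolding S4_identities_def ai_semiring_def by blast
qed

lemma in_V_S4_imp_S4_identities:
  assumes "in_V_S4 ad mu"
  shows "S4_identities ad mu"
proof -
  have "holds_in S4_carrier S4_add S4_mul u v" if "(u, v) \<in> set S4_basis" for u v
    using S4.S4_identities_axioms that unfolding S4_identities_iff_basis holds_in_def by blast
  then show ?thesis
    using assms unfolding S4_identities_iff_basis in_V_S4_def by blast
qed

theorem proposition6p13:
  fixes ad mu :: "'a \<Rightarrow> 'a \<Rightarrow> 'a"
  shows "in_V_S4 ad mu \<longleftrightarrow>
           ai_semiring ad mu \<and>
           (\<forall>x y. mu x y = mu y x) \<and>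
           (\<forall>x y. mu x y = ad (mu x y) x) \<and>
           (\<forall>x y z. ad (mu x x) (mu y z) = mu (mu (mu x x) y) z) \<and>
           (\<forall>x y z. mu (mu x y) z = ad (ad (mu x y) (mu y z)) (mu x z))"
proof -
  have "in_V_S4 ad mu \<longleftrightarrow> S4_identities ad mu"
    using in_V_S4_imp_S4_identities S4_identities.in_V_S4 by blast
  then show ?thesis
    unfolding S4_identities_def conj_assoc .
qed

end
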